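(* Assume the setting in the context (in particular Assumption (A)). Let $\rho>0$, $r\in V_f(\rho)$ and $n\in\mathbb{R}$, and let $[z,m]=\mathcal{A}_d(r,n)$ be the output of Procedure $\mathcal{A}_d$. Then: (i) $f(z)\leq f(r)-\frac{1}{2L_f}\|g(r)\|_*^2$; (ii) $f(z)-f^*\leq\left(\frac{\bar n_\rho}{m+1}\right)^2(f(r)-f^* )$; (iii) if $n\in(0,\lceil 4\bar n_\rho\rceil]$, then $m\in[n,\lceil 4\bar n_\rho\rceil]$.
   Context: Let $f:\mathbb{R}^n\to(-\infty,\infty]$ be a proper closed convex function such that the problem $f^*=\min_{x\in\mathbb{R}^n}f(x)$ is solvable. Let $\Omega_f=\{x: f(x)=f^*\}$, fix a norm $\|\cdot\|$ on $\mathbb{R}^n$ with dual norm $\|y\|_*=\sup\{y^Tz:\|z\|\leq 1\}$, and for $x\in\mathbb{R}^n$ let $\bar x=\arg\min_{z\in\Omega_f}\|x-z\|$. For $\rho\geq0$ let $V_f(\rho)=\{x: f(x)-f^*\leq\rho\}$. Let $\mathcal{A}$ be an iterative algorithm: for $x_0\in\mathrm{dom} f$ and integer $k\geq1$, $\mathcal{A}(x_0,k)$ denotes its $k$-th iterate started from $x_0$ (and $\mathcal{A}(x_0,0)=x_0$). Assumption (A): (i) for every $\rho>0$ there is $\mu_\rho>0$ with $f(x_0)-f^*\geq\frac{\mu_\rho}{2}\|x_0-\bar x_0\|^2$ for all $x_0\in V_f(\rho)$; (ii) there exist $a_f>0$, $L_f>0$ and $g:\mathbb{R}^n\to\mathbb{R}^n$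 with $g(x)=0\iff x\in\Omega_f$ such that for every $x_0\in\mathrm{dom} f$: $f(\mathcal{A}(x_0,1))\leq f(x_0)-\frac{1}{2L_f}\|g(x_0)\|_*^2$ and $f(\mathcal{A}(x_0,k))-f^*\leq\frac{a_f}{(k+1)^2}\|x_0-\bar x_0\|^2$ for all $k\geq1$; (iii) $\bar n_\rho:=\max\{\frac12,\sqrt{2a_f/\mu_\rho}\}$. Procedure $\mathcal{A}_d(r,n)$ (input $r\in\mathrm{dom} f$, $n\in\mathbb{R}$): set $x_0=r$, $k=0$. Repeat: $k\gets k+1$; set $x_k=\mathcal{A}(x_0,k)$ if $f(\mathcal{A}(x_0,k))\leq f(x_{k-1})$, and $x_k=x_{k-1}$ otherwise; set $\ell=\lfloor k/2\rfloor$; until $k\geq n$ and $f(x_\ell)-f(x_k)\leq\frac13(f(x_0)-f(x_\ell))$. Output $z=x_k$, $m=k$. *)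

theory Defs
  imports "HOL-Analysis.Analysis"
begin

text \<open>An extended-real-valued proper closed convex function on R^n is represented by
  its finite part f :: 'a \<Rightarrow> real together with its effective domain D = dom f;
  outside D the function is understood to be +\<infinity>.\<close>

definition is_norm :: "('a::real_vector \<Rightarrow> real) \<Rightarrow> bool" where
  "is_norm N \<longleftrightarrow> (\<forall>x. N x = 0 \<longleftrightarrow> x = 0) \<and> (\<forall>x y. N (x + y) \<le> N x + N y)
     \<and> (\<forall>c x. N (c *\<^sub>R x) = \<bar>c\<bar> * N x)"

definition dual_norm :: "('a::real_inner \<Rightarrow> real) \<Rightarrow> 'a \<Rightarrow> real" where
  "dual_norm N y = Sup {y \<bullet> z | z. N z \<le> 1}"

definition proper_closed_convex :: "'a::euclidean_space set \<Rightarrow> ('a \<Rightarrow> real) \<Rightarrow> bool" where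
  "proper_closed_convex D f \<longleftrightarrow> D \<noteq> {} \<and> convex D \<and> convex_on D f
     \<and> closed {(x, t). x \<in> D \<and> f x \<le> t}"

definition fstar :: "'a set \<Rightarrow> ('a \<Rightarrow> real) \<Rightarrow> real" where
  "fstar D f = Inf (f ` D)"

definition Omega :: "'a set \<Rightarrow> ('a \<Rightarrow> real) \<Rightarrow> 'a set" where
  "Omega D f = {x \<in> D. f x = fstar D f}"

definition distN :: "('a::real_vector \<Rightarrow> real) \<Rightarrow> 'a set \<Rightarrow> ('a \<Rightarrow> real) \<Rightarrow> 'a \<Rightarrow> real" where
  "distN N D f x = Inf ((\<lambda>z. N (x - z)) ` Omega D f)"

definition Vf :: "'a set \<Rightarrow> ('a \<Rightarrow> real) \<Rightarrow> real \<Rightarrow> 'a set" where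
  "Vf D f \<rho> = {x \<in> D. f x - fstar D f \<le> \<rho>}"

definition nbar :: "real \<Rightarrow> real \<Rightarrow> real" where
  "nbar a \<mu> = max (1/2) (sqrt (2 * a / \<mu>))"

fun Ad_seq :: "('a \<Rightarrow> real) \<Rightarrow> ('a \<Rightarrow> nat \<Rightarrow> 'a) \<Rightarrow> 'a \<Rightarrow> nat \<Rightarrow> 'a" where
  "Ad_seq f A r 0 = r"
| "Ad_seq f A r (Suc k) =
     (if f (A r (Suc k)) \<le> f (Ad_seq f A r k) then A r (Suc k) else Ad_seq f A r k)"

definition Ad_stop :: "('a \<Rightarrow> real) \<Rightarrow> ('a \<Rightarrow> nat \<Rightarrow> 'a) \<Rightarrow> 'a \<Rightarrow> real \<Rightarrow> nat \<Rightarrow> bool" where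
  "Ad_stop f A r n k \<longleftrightarrow> 1 \<le> k \<and> n \<le> real k \<and>
     f (Ad_seq f A r (k div 2)) - f (Ad_seq f A r k)
       \<le> (1/3) * (f (Ad_seq f A r 0) - f (Ad_seq f A r (k div 2)))"

definition Ad_m :: "('a \<Rightarrow> real) \<Rightarrow> ('a \<Rightarrow> nat \<Rightarrow> 'a) \<Rightarrow> 'a \<Rightarrow> real \<Rightarrow> nat" where
  "Ad_m f A r n = (LEAST k. Ad_stop f A r n k)"

definition Ad_z :: "('a \<Rightarrow> real) \<Rightarrow> ('a \<Rightarrow> nat \<Rightarrow> 'a) \<Rightarrow> 'a \<Rightarrow> real \<Rightarrow> 'a" where
  "Ad_z f A r n = Ad_seq f A r (Ad_m f A r n)"

end

theory Submission
  imports Defs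
begin

text \<open>The kept iterates x_k of Procedure A_d are never worse than A(r,k), so the sublinear
  rate a/(k+1)^2 \<parallel>r - rbar\<parallel>^2 of A combined with quadratic growth at r gives
  f(x_k) - f* \<le> (nbar/(k+1))^2 (f(r) - f*). Once k \<ge> 4 nbar, the midpoint l = k div 2 satisfies
  l + 1 \<ge> 2 nbar, so E = f(x_l) - f* is at most a quarter of f(r) - f*; since
  f(x_l) - f(x_k) \<le> E and E \<le> (f(r) - f* - E)/3, the stopping test succeeds.
  Hence the procedure stops no later than at max(n, 4 nbar), and the monotonicity of f(x_k)
  yields the descent bound from the first step.\<close>

lemma fstar_le:
  assumes "\<exists>x\<in>D. \<forall>y\<in>D. f x \<le> f y" and "y \<in> D"
  shows "fstar D f \<le> f y"
proof -
  from assms(1) have "bdd_below (f ` D)" by (auto simp: bdd_below_def)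
  then show ?thesis unfolding fstar_def using assms(2) by (simp add: cInf_lower)
qed

lemma nbar_ge_half: "1/2 \<le> nbar a \<mu>"
  by (simp add: nbar_def)

lemma nbar_sq_ge:
  assumes "0 \<le> a" and "0 < \<mu>"
  shows "2 * a / \<mu> \<le> (nbar a \<mu>)\<^sup>2"
proof -
  have "0 \<le> 2 * a / \<mu>" using assms by simp
  moreover have "sqrt (2 * a / \<mu>) \<le> nbar a \<mu>" by (simp add: nbar_def)
  ultimately have "(sqrt (2 * a / \<mu>))\<^sup>2 \<le> (nbar a \<mu>)\<^sup>2" by (intro power_mono) auto
  then show ?thesis using \<open>0 \<le> 2 * a / \<mu>\<close> by simp
qed

lemma nbar_rate_bound:
  fixes a \<mu> d e h t :: real
  assumes "0 \<le> a" and "0 < \<mu>" and "0 < t"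
    and growth: "\<mu> / 2 * d\<^sup>2 \<le> h"
    and rate: "e \<le> a / t\<^sup>2 * d\<^sup>2"
  shows "e \<le> (nbar a \<mu> / t)\<^sup>2 * h"
proof -
  have "0 \<le> \<mu> / 2 * d\<^sup>2" using assms(2) by simp
  with growth have "0 \<le> h" by linarith
  have "d\<^sup>2 \<le> 2 / \<mu> * h" using growth assms(2) by (simp add: field_simps)
  then have "a / t\<^sup>2 * d\<^sup>2 \<le> a / t\<^sup>2 * (2 / \<mu> * h)"
    by (rule mult_left_mono) (use assms(1) in simp)
  with rate have "e \<le> a / t\<^sup>2 * (2 / \<mu> * h)" by linarith
  also have "\<dots> = (2 * a / \<mu>) / t\<^sup>2 * h" by (simp add: ac_simps)
  also have "\<dots> \<le> (nbar a \<mu>)\<^sup>2 / t\<^sup>2 * h"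
    using nbar_sq_ge[OF assms(1,2)] \<open>0 \<le> h\<close> by (intro mult_right_mono divide_right_mono) auto
  finally show ?thesis by (simp add: power_divide)
qed

lemma Ad_seq_in_dom:
  assumes "r \<in> D" and "\<And>k. 1 \<le> k \<Longrightarrow> A r k \<in> D"
  shows "Ad_seq f A r k \<in> D"
  by (induction k) (auto simp: assms)

lemma Ad_seq_Suc_le: "f (Ad_seq f A r (Suc k)) \<le> f (Ad_seq f A r k)"
  by simp

lemma Ad_seq_antimono:
  assumes "k \<le> j"
  shows "f (Ad_seq f A r j) \<le> f (Ad_seq f A r k)"
  using assms
proof (induction j rule: dec_induct)
  case (step j)
  then show ?case using Ad_seq_Suc_le[of f A r j] by linarith
qed simp

lemma Ad_seq_le_iterate:
  assumes "1 \<le> k"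
  shows "f (Ad_seq f A r k) \<le> f (A r k)"
proof -
  obtain j where "k = Suc j" using assms by (cases k) auto
  then show ?thesis by simp
qed

lemma Ad_seq_rate:
  assumes "1 \<le> k" and "0 \<le> a" and "0 < \<mu>"
    and growth: "\<mu> / 2 * d\<^sup>2 \<le> f r - c"
    and rate: "f (A r k) - c \<le> a / (real k + 1)\<^sup>2 * d\<^sup>2"
  shows "f (Ad_seq f A r k) - c \<le> (nbar a \<mu> / (real k + 1))\<^sup>2 * (f r - c)"
  using Ad_seq_le_iterate[OF assms(1), of f A r] rate
  by (intro nbar_rate_bound[OF assms(2,3) _ growth]) auto

lemma Ad_stop_of_rate:
  fixes b c :: real
  assumes "1/2 \<le> b"
    and rate: "\<And>k. 1 \<le> k \<Longrightarrow> f (Ad_seq f A r k) - c \<le> (b / (real k + 1))\<^sup>2 * (f r - c)"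
    and lower: "\<And>k. c \<le> f (Ad_seq f A r k)"
    and n_le: "n \<le> real k" and b_le: "4 * b \<le> real k"
  shows "Ad_stop f A r n k"
proof -
  define l where "l = k div 2"
  have "real k \<le> 2 * real l + 1" unfolding l_def by linarith
  then have "2 * b \<le> real l + 1" and "1 \<le> l" using assms(1) b_le by linarith+
  then have "b / (real l + 1) \<le> 1/2" using assms(1) by (simp add: field_simps)
  then have "(b / (real l + 1))\<^sup>2 \<le> (1/2)\<^sup>2" using assms(1) by (intro power_mono) auto
  then have "(b / (real l + 1))\<^sup>2 \<le> 1/4" by (simp add: power_divide)
  moreover have "0 \<le> f r - c" using lower[of 0] by simp
  ultimately have "(b / (real l + 1))\<^sup>2 * (f r - c) \<le> 1/4 * (f r - c)"
    by (rule mult_right_mono)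
  with rate[OF \<open>1 \<le> l\<close>] have "f (Ad_seq f A r l) - c \<le> 1/4 * (f r - c)" by linarith
  then show ?thesis
    using lower[of k] \<open>1 \<le> l\<close> n_le by (simp add: Ad_stop_def l_def)
qed

lemma Ad_m_stops:
  assumes "Ad_stop f A r n k"
  shows "Ad_stop f A r n (Ad_m f A r n)"
  unfolding Ad_m_def using assms by (rule LeastI)

lemma Ad_m_le:
  assumes "Ad_stop f A r n k"
  shows "Ad_m f A r n \<le> k"
  unfolding Ad_m_def using assms by (rule Least_le)

theorem mainTheorem2:
  fixes D :: "'a::euclidean_space set" and f :: "'a \<Rightarrow> real"
    and N :: "'a \<Rightarrow> real" and A :: "'a \<Rightarrow> nat \<Rightarrow> 'a" and g :: "'a \<Rightarrow> 'a"
    and \<mu> :: "real \<Rightarrow> real" and a L \<rho> n :: real and r :: 'a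
  assumes pcc: "proper_closed_convex D f"
    and solvable: "\<exists>x\<in>D. \<forall>y\<in>D. f x \<le> f y"
    and normN: "is_norm N"
    and A0: "\<And>x0. A x0 0 = x0"
    and A_i: "\<And>\<rho>'. \<rho>' > 0 \<Longrightarrow> \<mu> \<rho>' > 0 \<and>
               (\<forall>x0\<in>Vf D f \<rho>'. f x0 - fstar D f \<ge> \<mu> \<rho>' / 2 * (distN N D f x0)\<^sup>2)"
    and a_pos: "a > 0" and L_pos: "L > 0"
    and g_zero: "\<And>x. g x = 0 \<longleftrightarrow> x \<in> Omega D f"
    and A_descent: "\<And>x0. x0 \<in> D \<Longrightarrow> A x0 1 \<in> D \<and>
               f (A x0 1) \<le> f x0 - 1 / (2 * L) * (dual_norm N (g x0))\<^sup>2"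
    and A_rate: "\<And>x0 k. x0 \<in> D \<Longrightarrow> k \<ge> 1 \<Longrightarrow> A x0 k \<in> D \<and>
               f (A x0 k) - fstar D f \<le> a / (real k + 1)\<^sup>2 * (distN N D f x0)\<^sup>2"
    and rho_pos: "\<rho> > 0"
    and r_in: "r \<in> Vf D f \<rho>"
  shows "(\<exists>k. Ad_stop f A r n k)
    \<and> f (Ad_z f A r n) \<le> f r - 1 / (2 * L) * (dual_norm N (g r))\<^sup>2
    \<and> f (Ad_z f A r n) - fstar D f
        \<le> (nbar a (\<mu> \<rho>) / (real (Ad_m f A r n) + 1))\<^sup>2 * (f r - fstar D f)
    \<and> (0 < n \<and> n \<le> real_of_int \<lceil>4 * nbar a (\<mu> \<rho>)\<rceil> \<longrightarrow>
         n \<le> real (Ad_m f A r n) \<and> real (Ad_m f A r n) \<le> real_of_int \<lceil>4 * nbar a (\<mu> \<rho>)\<rceil>)"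
proof -
  define nb where "nb = nbar a (\<mu> \<rho>)"
  define m where "m = Ad_m f A r n"
  have rD: "r \<in> D" using r_in by (simp add: Vf_def)
  have rate: "f (Ad_seq f A r k) - fstar D f \<le> (nb / (real k + 1))\<^sup>2 * (f r - fstar D f)"
    if "1 \<le> k" for k
    using A_i[OF rho_pos] r_in A_rate[OF rD that] a_pos
    unfolding nb_def by (intro Ad_seq_rate[OF that]) auto
  have lower: "fstar D f \<le> f (Ad_seq f A r k)" for k
    using A_rate[OF rD] by (intro fstar_le[OF solvable] Ad_seq_in_dom[OF rD]) auto
  have "1/2 \<le> nb" unfolding nb_def by (rule nbar_ge_half)
  have stops: "Ad_stop f A r n k" if "n \<le> real k" and "4 * nb \<le> real k" for k
    using Ad_stop_of_rate[OF \<open>1/2 \<le> nb\<close> rate lower that] .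
  have stop_K: "Ad_stop f A r n (nat \<lceil>max n (4 * nb)\<rceil>)" by (intro stops) linarith+
  then have "Ad_stop f A r n m" unfolding m_def by (rule Ad_m_stops)
  then have "1 \<le> m" and "n \<le> real m" by (auto simp: Ad_stop_def)
  have "f (Ad_seq f A r m) \<le> f (Ad_seq f A r 1)" using \<open>1 \<le> m\<close> by (rule Ad_seq_antimono)
  also have "\<dots> \<le> f (A r 1)" by (rule Ad_seq_le_iterate) simp
  also have "\<dots> \<le> f r - 1 / (2 * L) * (dual_norm N (g r))\<^sup>2" using A_descent[OF rD] by simp
  finally have descent: "f (Ad_seq f A r m) \<le> \<dots>" .
  have "m \<le> nat \<lceil>4 * nb\<rceil>" if "n \<le> real_of_int \<lceil>4 * nb\<rceil>"
    unfolding m_def using that \<open>1/2 \<le> nb\<close> by (intro Ad_m_le stops) auto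
  then show ?thesis
    using stop_K descent rate[OF \<open>1 \<le> m\<close>] \<open>n \<le> real m\<close> \<open>1/2 \<le> nb\<close>
    by (auto simp: Ad_z_def m_def nb_def)
qed

end
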